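(* Let $S,B\subseteq\{-1,1,*\}^X$ be binary hypothesis classes. For any $\varepsilon,\delta\ge0$ and $n\in\mathbb{Z}_{\ge0}$, every learner that solves agnostic learning $\mathsf{AgnL}_n(\mathbf{A}_{S,B},\varepsilon,\delta)$ also solves comparative learning $\mathsf{CompL}_n(S,B,\varepsilon,\delta)$; i.e. $\mathsf{AgnL}_n(\mathbf{A}_{S,B},\varepsilon,\delta)\subseteq\mathsf{CompL}_n(S,B,\varepsilon,\delta)$.
   Context: $X$ is a non-empty set; hypotheses are functions $X\to\{-1,1,*\}$; distributions are discrete. For $s,b:X\to\{-1,1,*\}$, the agreement hypothesis $\mathbf{a}_{s,b}:X\to\{-1,1,*\}$ is $\mathbf{a}_{s,b}(x)=-1$ if $s(x)=b(x)=-1$, $\mathbf{a}_{s,b}(x)=1$ if $s(x)=b(x)=1$, and $\mathbf{a}_{s,b}(x)=*$ otherwise; $\mathbf{A}_{S,B}=\{\mathbf{a}_{s,b}:s\in S,b\in B\}$. A learner takes $n$ data points in $X\times\{-1,1\}$ and outputs $f:X\to\{-1,1\}$ (possibly randomized). It belongs to $\mathsf{AgnL}_n(H,\varepsilon,\delta)$ if for every distribution $\mu$ on $X\times\{-1,1\}$, given $n$ i.i.d. samples from $\mu$, with probability $\ge1-\delta$ it outputs $f$ with $\Pr_\mu[f(x)\ne y]\le\inf_{h\in H}\Pr_\mu[h(x)\ne y]+\varepsilon$ (where $h(x)=*$ counts as an error). It belongs to $\mathsf{CompL}_n(S,B,\varepsilon,\delta)$ if the same guarantee holds with $H$ replaced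 by $B$, but only for distributions $\mu$ with $\Pr_\mu[s(x)=y]=1$ for some $s\in S$. *)

theory Defs
  imports "HOL-Probability.Probability"
begin

datatype sign = Neg | Pos

text \<open>Partial hypotheses X -> {-1,1,*}: the value None encodes *.\<close>
type_synonym 'x phyp = "'x \<Rightarrow> sign option"

definition agree :: "'x phyp \<Rightarrow> 'x phyp \<Rightarrow> 'x phyp" where
  "agree s b = (\<lambda>x. if s x = Some Neg \<and> b x = Some Neg then Some Neg
                    else if s x = Some Pos \<and> b x = Some Pos then Some Pos
                    else None)"

definition agree_class :: "'x phyp set \<Rightarrow> 'x phyp set \<Rightarrow> 'x phyp set" where
  "agree_class S B = {agree s b | s b. s \<in> S \<and> b \<in> B}"

text \<open>Error of a partial hypothesis (the value * always counts as an error).\<close>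
definition perr :: "('x \<times> sign) pmf \<Rightarrow> 'x phyp \<Rightarrow> real" where
  "perr \<mu> h = measure_pmf.prob \<mu> {(x, y). h x \<noteq> Some y}"

definition terr :: "('x \<times> sign) pmf \<Rightarrow> ('x \<Rightarrow> sign) \<Rightarrow> real" where
  "terr \<mu> f = measure_pmf.prob \<mu> {(x, y). f x \<noteq> y}"

type_synonym 'x learner = "('x \<times> sign) list \<Rightarrow> ('x \<Rightarrow> sign) pmf"

definition learner_output :: "nat \<Rightarrow> 'x learner \<Rightarrow> ('x \<times> sign) pmf \<Rightarrow> ('x \<Rightarrow> sign) pmf" where
  "learner_output n L \<mu> = bind_pmf (replicate_pmf n \<mu>) L"

text \<open>Success: error at most inf_{h in H} err(h) + eps (infimum in the extended reals,
  so that the infimum over the empty class is +infinity).\<close>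
definition good_for :: "('x \<times> sign) pmf \<Rightarrow> 'x phyp set \<Rightarrow> real \<Rightarrow> ('x \<Rightarrow> sign) \<Rightarrow> bool" where
  "good_for \<mu> H \<epsilon> f \<longleftrightarrow> ereal (terr \<mu> f) \<le> (INF h\<in>H. ereal (perr \<mu> h)) + ereal \<epsilon>"

definition AgnL :: "nat \<Rightarrow> 'x phyp set \<Rightarrow> real \<Rightarrow> real \<Rightarrow> 'x learner set" where
  "AgnL n H \<epsilon> \<delta> = {L. \<forall>\<mu> :: ('x \<times> sign) pmf.
      measure_pmf.prob (learner_output n L \<mu>) {f. good_for \<mu> H \<epsilon> f} \<ge> 1 - \<delta>}"

definition realizable :: "'x phyp set \<Rightarrow> ('x \<times> sign) pmf \<Rightarrow> bool" where
  "realizable S \<mu> \<longleftrightarrow> (\<exists>s\<in>S. measure_pmf.prob \<mu> {(x, y). s x = Some y} = 1)"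

definition CompL :: "nat \<Rightarrow> 'x phyp set \<Rightarrow> 'x phyp set \<Rightarrow> real \<Rightarrow> real \<Rightarrow> 'x learner set" where
  "CompL n S B \<epsilon> \<delta> = {L. \<forall>\<mu> :: ('x \<times> sign) pmf. realizable S \<mu> \<longrightarrow>
      measure_pmf.prob (learner_output n L \<mu>) {f. good_for \<mu> B \<epsilon> f} \<ge> 1 - \<delta>}"

end

theory Submission
  imports Defs
begin

text \<open>The agreement hypothesis \<open>a\<^sub>s\<^sub>,\<^sub>b\<close> errs only where \<open>s\<close> or \<open>b\<close> errs, so
  \<open>err(a\<^sub>s\<^sub>,\<^sub>b) \<le> err(s) + err(b)\<close>. If \<open>\<mu>\<close> is realized by \<open>s \<in> S\<close>, then \<open>err(s) = 0\<close>, hence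
  the best error in \<open>A\<^sub>S\<^sub>,\<^sub>B\<close> is at most the best error in \<open>B\<close>, and every output that is
  good with respect to \<open>A\<^sub>S\<^sub>,\<^sub>B\<close> is good with respect to \<open>B\<close>.\<close>

lemma perr_agree_le_add: "perr \<mu> (agree s b) \<le> perr \<mu> s + perr \<mu> b"
proof -
  have "{(x, y). agree s b x \<noteq> Some y} \<subseteq> {(x, y). s x \<noteq> Some y} \<union> {(x, y). b x \<noteq> Some y}"
    by (auto simp: agree_def split: if_splits) (metis sign.exhaust)+
  then have "perr \<mu> (agree s b)
      \<le> measure_pmf.prob \<mu> ({(x, y). s x \<noteq> Some y} \<union> {(x, y). b x \<noteq> Some y})"
    unfolding perr_def by (intro measure_pmf.finite_measure_mono) auto
  also have "\<dots> \<le> perr \<mu> s + perr \<mu> b"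
    unfolding perr_def by (intro measure_subadditive) auto
  finally show ?thesis .
qed

lemma perr_eq_0_iff_prob_correct:
  "perr \<mu> s = 0 \<longleftrightarrow> measure_pmf.prob \<mu> {(x, y). s x = Some y} = 1"
proof -
  have "{(x, y). s x \<noteq> Some y} = UNIV - {(x, y). s x = Some y}"
    by auto
  then have "perr \<mu> s = 1 - measure_pmf.prob \<mu> {(x, y). s x = Some y}"
    unfolding perr_def using measure_pmf.prob_compl[of "{(x, y). s x = Some y}" \<mu>] by simp
  then show ?thesis by simp
qed

lemma INF_perr_agree_class_le:
  assumes "realizable S \<mu>"
  shows "(INF h\<in>agree_class S B. ereal (perr \<mu> h)) \<le> (INF h\<in>B. ereal (perr \<mu> h))"
proof (rule INF_greatest)
  fix b assume "b \<in> B"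
  obtain s where "s \<in> S" and "perr \<mu> s = 0"
    using assms by (auto simp: realizable_def perr_eq_0_iff_prob_correct)
  with \<open>b \<in> B\<close> have "agree s b \<in> agree_class S B"
    by (auto simp: agree_class_def)
  then have "(INF h\<in>agree_class S B. ereal (perr \<mu> h)) \<le> ereal (perr \<mu> (agree s b))"
    by (rule INF_lower)
  also have "\<dots> \<le> ereal (perr \<mu> b)"
    using perr_agree_le_add[of \<mu> s b] \<open>perr \<mu> s = 0\<close> by simp
  finally show "(INF h\<in>agree_class S B. ereal (perr \<mu> h)) \<le> ereal (perr \<mu> b)" .
qed

lemma good_for_mono_INF:
  assumes "(INF h\<in>H. ereal (perr \<mu> h)) \<le> (INF h\<in>H'. ereal (perr \<mu> h))"
    and "good_for \<mu> H \<epsilon> f"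
  shows "good_for \<mu> H' \<epsilon> f"
  using assms add_right_mono order_trans unfolding good_for_def by blast

text \<open>The inclusion holds for arbitrary \<open>\<epsilon>\<close> and \<open>\<delta>\<close>.\<close>

theorem lemma3p6:
  fixes S B :: "'x phyp set" and \<epsilon> \<delta> :: real and n :: nat
  assumes "\<epsilon> \<ge> 0" and "\<delta> \<ge> 0"
  shows "AgnL n (agree_class S B) \<epsilon> \<delta> \<subseteq> CompL n S B \<epsilon> \<delta>"
proof
  fix L assume L: "L \<in> AgnL n (agree_class S B) \<epsilon> \<delta>"
  show "L \<in> CompL n S B \<epsilon> \<delta>"
    unfolding CompL_def
  proof (intro CollectI allI impI)
    fix \<mu> :: "('x \<times> sign) pmf"
    assume "realizable S \<mu>"
    then have "{f. good_for \<mu> (agree_class S B) \<epsilon> f} \<subseteq> {f. good_for \<mu> B \<epsilon> f}"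
      using good_for_mono_INF INF_perr_agree_class_le by blast
    then have "measure_pmf.prob (learner_output n L \<mu>) {f. good_for \<mu> (agree_class S B) \<epsilon> f}
        \<le> measure_pmf.prob (learner_output n L \<mu>) {f. good_for \<mu> B \<epsilon> f}"
      by (intro measure_pmf.finite_measure_mono) auto
    moreover have "1 - \<delta>
        \<le> measure_pmf.prob (learner_output n L \<mu>) {f. good_for \<mu> (agree_class S B) \<epsilon> f}"
      using L unfolding AgnL_def by blast
    ultimately show "1 - \<delta> \<le> measure_pmf.prob (learner_output n L \<mu>) {f. good_for \<mu> B \<epsilon> f}"
      by linarith
  qed
qed

end
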